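(* Let $A,B\in\mathcal{M}_n$, let $\psi\colon H^*(M(A);\mathbb{Z})\to H^*(M(B);\mathbb{Z})$ be a graded ring isomorphism (also denoting its rationalization by $\psi$), and let $\sigma$ be a permutation of $\{1,\dots,n\}$ and $q_1,\dots,q_n$ nonzero rationals with $\psi(y^A_j)=q_jy^B_{\sigma(j)}$ for all $j$. Suppose $q_j=\pm\tfrac12$ for some $j$. Then there are $i<j$ and $c\in\mathbb{Z}\setminus\{0\}$ such that $\alpha^A_j=cy^A_i$. If $\alpha^A_j$ is not of even exceptional type, then $c$ is odd and $q_i=\pm2$. If neither $\alpha^A_j$ nor $\alpha^B_{\sigma(i)}$ is of even exceptional type, then $\alpha^B_{\sigma(i)}=d\,y^B_{\sigma(j)}$ for some odd integer $d$.
   Context: Let $\mathcal{M}_n$ be the set of integral strictly upper triangular $n\times n$ matrices $A=(A^i_j)$ ($A^i_j$ is the $(i,j)$ entry, and $A^i_j=0$ for $i\ge j$). For $A\in\mathcal{M}_n$, $M(A)$ denotes the Bott manifold obtained as the quotient of $(S^3)^n$ ($S^3\subset\mathbb{C}^2$ the unit sphere) by the free $(S^1)^n$-action $(g_1,\dots,g_n)\cdot((z_1,w_1),\dots,(z_n,w_n))=\big(((\prod_{k<j}g_k^{-A^k_j})g_jz_j,\ g_jw_j)\big)_{j=1}^n$. Let $x^A_j\in H^2(M(A);\mathbb{Z})$ be the first Chern class of the line bundle obtained as the quotient of $(S^3)^n\times\mathbb{C}$ where $g$ acts on the $\mathbb{C}$-factor by $g_j^{-1}$. Put $\alpha^A_j=\sum_{i<j}A^i_jx^A_i$.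 Then $H^*(M(A);\mathbb{Z})=\mathbb{Z}[x^A_1,\dots,x^A_n]/((x^A_j)^2-\alpha^A_jx^A_j\mid j=1,\dots,n)$. Define $y^A_j=x^A_j-\tfrac12\alpha^A_j\in H^2(M(A);\mathbb{Q})$. The same notation is used for $B$. We say $\alpha^A_j$ is of exceptional type if $\alpha^A_j=cy^A_i$ for some nonzero integer $c$ and some $i<j$, and of even exceptional type if moreover this integer $c$ is even. *)

theory Defs
  imports Complex_Main "HOL-Library.Poly_Mapping" "HOL-Combinatorics.Permutations"
begin

text \<open>Integral strictly upper triangular n x n matrices (0-based indices; entry (i,j) is A i j).\<close>
definition su_matrix :: "nat \<Rightarrow> (nat \<Rightarrow> nat \<Rightarrow> int) \<Rightarrow> bool" where
  "su_matrix n A \<longleftrightarrow> (\<forall>i j. A i j \<noteq> 0 \<longrightarrow> i < j \<and> j < n)"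

text \<open>Integral polynomials in the variables x_0, x_1, ... (monomials = exponent maps).\<close>
type_synonym ipoly = "(nat \<Rightarrow>\<^sub>0 nat) \<Rightarrow>\<^sub>0 int"

definition pconst :: "int \<Rightarrow> ipoly" where
  "pconst c = Poly_Mapping.single 0 c"

definition mvar :: "nat \<Rightarrow> ipoly" where
  "mvar i = Poly_Mapping.single (Poly_Mapping.single i 1) 1"

definition in_vars :: "nat \<Rightarrow> ipoly \<Rightarrow> bool" where
  "in_vars n p \<longleftrightarrow> (\<forall>m \<in> Poly_Mapping.keys p. \<forall>i \<in> Poly_Mapping.keys m. i < n)"

definition alphaP :: "(nat \<Rightarrow> nat \<Rightarrow> int) \<Rightarrow> nat \<Rightarrow> ipoly" where
  "alphaP A j = (\<Sum>i<j. pconst (A i j) * mvar i)"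

definition bott_rel :: "(nat \<Rightarrow> nat \<Rightarrow> int) \<Rightarrow> nat \<Rightarrow> ipoly" where
  "bott_rel A j = mvar j * mvar j - alphaP A j * mvar j"

definition bott_ideal :: "nat \<Rightarrow> (nat \<Rightarrow> nat \<Rightarrow> int) \<Rightarrow> ipoly set" where
  "bott_ideal n A = {(\<Sum>j<n. f j * bott_rel A j) | f. \<forall>j<n. in_vars n (f j)}"

text \<open>Equality in H^*(M(A);Z) = Z[x_0..x_(n-1)] / bott_ideal of representatives.\<close>
definition hcong :: "nat \<Rightarrow> (nat \<Rightarrow> nat \<Rightarrow> int) \<Rightarrow> ipoly \<Rightarrow> ipoly \<Rightarrow> bool" where
  "hcong n A p q \<longleftrightarrow> p - q \<in> bott_ideal n A"

definition psubst :: "(nat \<Rightarrow> ipoly) \<Rightarrow> ipoly \<Rightarrow> ipoly" where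
  "psubst L p = (\<Sum>m \<in> Poly_Mapping.keys p.
      pconst (Poly_Mapping.lookup p m) * (\<Prod>i \<in> Poly_Mapping.keys m. L i ^ Poly_Mapping.lookup m i))"

text \<open>Linear form sum_(k<n) P i k x_k: image of the generator x_i^A in H^2(M(B)).\<close>
definition lin_img :: "nat \<Rightarrow> (nat \<Rightarrow> nat \<Rightarrow> int) \<Rightarrow> nat \<Rightarrow> ipoly" where
  "lin_img n P i = (\<Sum>k<n. pconst (P i k) * mvar k)"

text \<open>A graded ring homomorphism H^*(M(A)) -> H^*(M(B)) is determined by the images of the
  degree-2 generators x_i^A, which are classes in H^2(M(B);Z), free with basis x_k^B; it is the map
  induced by substituting x_i := sum_k P i k x_k. The predicate says this substitution induces a
  well-defined, injective and surjective map of the quotient rings, i.e. a graded ring isomorphism.\<close>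
definition bott_graded_iso ::
  "nat \<Rightarrow> (nat \<Rightarrow> nat \<Rightarrow> int) \<Rightarrow> (nat \<Rightarrow> nat \<Rightarrow> int) \<Rightarrow> (nat \<Rightarrow> nat \<Rightarrow> int) \<Rightarrow> bool" where
  "bott_graded_iso n A B P \<longleftrightarrow>
     (\<forall>p q. in_vars n p \<longrightarrow> in_vars n q \<longrightarrow>
        (hcong n A p q \<longleftrightarrow> hcong n B (psubst (lin_img n P) p) (psubst (lin_img n P) q))) \<and>
     (\<forall>q. in_vars n q \<longrightarrow> (\<exists>p. in_vars n p \<and> hcong n B (psubst (lin_img n P) p) q))"

text \<open>Degree-2 rational classes, as coefficient vectors w.r.t. the basis x_0..x_(n-1) of
  H^2(M(A);Q) (only entries k < n are meaningful).\<close>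
definition alphaV :: "(nat \<Rightarrow> nat \<Rightarrow> int) \<Rightarrow> nat \<Rightarrow> nat \<Rightarrow> rat" where
  "alphaV A j = (\<lambda>k. if k < j then of_int (A k j) else 0)"

definition yV :: "(nat \<Rightarrow> nat \<Rightarrow> int) \<Rightarrow> nat \<Rightarrow> nat \<Rightarrow> rat" where
  "yV A j = (\<lambda>k. (if k = j then 1 else 0) - alphaV A j k / 2)"

definition eqV :: "nat \<Rightarrow> (nat \<Rightarrow> rat) \<Rightarrow> (nat \<Rightarrow> rat) \<Rightarrow> bool" where
  "eqV n v w \<longleftrightarrow> (\<forall>k<n. v k = w k)"

text \<open>Rationalization of psi on degree 2: x_i maps to sum_k P i k x_k.\<close>
definition psiV :: "nat \<Rightarrow> (nat \<Rightarrow> nat \<Rightarrow> int) \<Rightarrow> (nat \<Rightarrow> rat) \<Rightarrow> nat \<Rightarrow> rat" where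
  "psiV n P v = (\<lambda>k. \<Sum>i<n. v i * of_int (P i k))"

definition scaleV :: "rat \<Rightarrow> (nat \<Rightarrow> rat) \<Rightarrow> nat \<Rightarrow> rat" where
  "scaleV c v = (\<lambda>k. c * v k)"

definition exc_with :: "nat \<Rightarrow> (nat \<Rightarrow> nat \<Rightarrow> int) \<Rightarrow> nat \<Rightarrow> int \<Rightarrow> nat \<Rightarrow> bool" where
  "exc_with n A j c i \<longleftrightarrow> i < j \<and> c \<noteq> 0 \<and> eqV n (alphaV A j) (scaleV (of_int c) (yV A i))"

definition even_exceptional :: "nat \<Rightarrow> (nat \<Rightarrow> nat \<Rightarrow> int) \<Rightarrow> nat \<Rightarrow> bool" where
  "even_exceptional n A j \<longleftrightarrow> (\<exists>c i. exc_with n A j c i \<and> even c)"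

end

theory Submission
  imports Defs "HOL-Computational_Algebra.Polynomial" "HOL-Library.Indicator_Function"
begin

text \<open>Since \<open>\<psi>\<close> is a linear substitution, the relation \<open>x\<^sub>j\<^sup>2 = \<alpha>\<^sub>j x\<^sub>j\<close> of \<open>M(A)\<close> is mapped to a
  combination of the relations of \<open>M(B)\<close>; all such facts are extracted by evaluating polynomials at
  rational points and taking homogeneous components. Writing \<open>\<psi>(x\<^sub>j) = q\<^sub>j y\<^sub>\<sigma>\<^sub>j + \<psi>(\<alpha>\<^sub>j)/2\<close> with
  \<open>q\<^sub>j = \<plusminus>1/2\<close>, the relation \<open>y\<^sub>j\<^sup>2 = (\<alpha>\<^sub>j/2)\<^sup>2\<close> becomes \<open>\<psi>(\<alpha>\<^sub>j)\<^sup>2 = (\<alpha>\<^sub>\<sigma>\<^sub>j/2)\<^sup>2\<close> in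
  \<open>H\<^sup>4(M(B))\<close>. A class whose square equals the square of a class supported strictly below its top
  index \<open>L\<close> is a multiple of \<open>y\<^sub>L\<close>; so \<open>\<psi>(\<alpha>\<^sub>j) = t y\<^sub>L\<close>, and injectivity of \<open>\<psi>\<close> gives
  \<open>\<alpha>\<^sub>j = (t/q\<^sub>i) y\<^sub>i\<close> with \<open>\<sigma> i = L\<close>. Integrality of \<open>\<psi>(x\<^sub>j)\<close> then forces \<open>P j L * B (\<sigma> j) L\<close> to be
  odd, surjectivity of \<open>\<psi>\<close> makes \<open>2/q\<^sub>i\<close> an integer dividing 4, and the same descent applied to
  \<open>(t/2) \<alpha>\<^sub>L\<close> identifies \<open>\<alpha>\<^sub>L\<close> as an odd multiple of \<open>y\<^sub>\<sigma>\<^sub>j\<close>.\<close>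

section \<open>Evaluating integral polynomials\<close>

definition meval :: "(nat \<Rightarrow> 'a::comm_ring_1) \<Rightarrow> (nat \<Rightarrow>\<^sub>0 nat) \<Rightarrow> 'a" where
  "meval z m = (\<Prod>i\<in>Poly_Mapping.keys m. z i ^ Poly_Mapping.lookup m i)"

definition peval :: "(nat \<Rightarrow> 'a::comm_ring_1) \<Rightarrow> ipoly \<Rightarrow> 'a" where
  "peval z p = (\<Sum>m\<in>Poly_Mapping.keys p. of_int (Poly_Mapping.lookup p m) * meval z m)"

lemma meval_superset:
  assumes "finite S" "Poly_Mapping.keys m \<subseteq> S"
  shows "meval z m = (\<Prod>i\<in>S. z i ^ Poly_Mapping.lookup m i)"
  unfolding meval_def
  by (rule prod.mono_neutral_left) (use assms in \<open>auto simp: in_keys_iff\<close>)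

lemma meval_add: "meval z (a + b) = meval z a * meval z b"
proof -
  let ?S = "Poly_Mapping.keys a \<union> Poly_Mapping.keys b"
  have "meval z (a + b) = (\<Prod>i\<in>?S. z i ^ Poly_Mapping.lookup (a + b) i)"
    by (rule meval_superset) (auto dest: set_mp[OF keys_add])
  also have "\<dots> = (\<Prod>i\<in>?S. z i ^ Poly_Mapping.lookup a i) * (\<Prod>i\<in>?S. z i ^ Poly_Mapping.lookup b i)"
    by (simp add: lookup_add power_add prod.distrib)
  also have "\<dots> = meval z a * meval z b"
    using meval_superset[of ?S a z] meval_superset[of ?S b z] by simp
  finally show ?thesis .
qed

lemma peval_superset:
  assumes "finite S" "Poly_Mapping.keys p \<subseteq> S"
  shows "peval z p = (\<Sum>m\<in>S. of_int (Poly_Mapping.lookup p m) * meval z m)"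
  unfolding peval_def
  by (rule sum.mono_neutral_left) (use assms in \<open>auto simp: in_keys_iff\<close>)

lemma peval_0 [simp]: "peval z 0 = 0"
  by (simp add: peval_def)

lemma peval_1 [simp]: "peval z 1 = 1"
  by (simp add: peval_def meval_def)

lemma peval_single: "peval z (Poly_Mapping.single m c) = of_int c * meval z m"
  by (simp add: peval_def)

lemma peval_pconst [simp]: "peval z (pconst c) = of_int c"
  by (simp add: pconst_def peval_single meval_def)

lemma peval_mvar [simp]: "peval z (mvar i) = z i"
  by (simp add: mvar_def peval_single meval_def)

lemma peval_add [simp]: "peval z (p + q) = peval z p + peval z q"
proof -
  let ?S = "Poly_Mapping.keys p \<union> Poly_Mapping.keys q"
  have "peval z (p + q) = (\<Sum>m\<in>?S. of_int (Poly_Mapping.lookup (p + q) m) * meval z m)"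
    by (rule peval_superset) (auto dest: set_mp[OF keys_add])
  also have "\<dots> = (\<Sum>m\<in>?S. of_int (Poly_Mapping.lookup p m) * meval z m)
                + (\<Sum>m\<in>?S. of_int (Poly_Mapping.lookup q m) * meval z m)"
    by (simp add: lookup_add distrib_right sum.distrib)
  also have "\<dots> = peval z p + peval z q"
    using peval_superset[of ?S p z] peval_superset[of ?S q z] by simp
  finally show ?thesis .
qed

lemma peval_uminus [simp]: "peval z (- p) = - peval z p"
  by (simp add: peval_def sum_negf)

lemma peval_diff [simp]: "peval z (p - q) = peval z p - peval z q"
  using peval_add[of z p "- q"] by simp

lemma peval_sum [simp]: "peval z (sum f A) = (\<Sum>a\<in>A. peval z (f a))"
  by (induction A rule: infinite_finite_induct) auto

lemma poly_mapping_sum_single_keys: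
  "p = (\<Sum>m\<in>Poly_Mapping.keys p. Poly_Mapping.single m (Poly_Mapping.lookup p m))"
  by (rule poly_mapping_eqI) (auto simp: lookup_sum lookup_single when_def in_keys_iff intro: sym)

lemma peval_mult [simp]: "peval z (p * q) = peval z p * peval z q"
proof -
  have "p * q = (\<Sum>a\<in>Poly_Mapping.keys p. \<Sum>b\<in>Poly_Mapping.keys q.
      Poly_Mapping.single (a + b) (Poly_Mapping.lookup p a * Poly_Mapping.lookup q b))"
    by (subst (1 2) poly_mapping_sum_single_keys)
       (simp add: sum_distrib_left sum_distrib_right mult_single sum.swap[of _ "Poly_Mapping.keys q"])
  then have "peval z (p * q) = (\<Sum>a\<in>Poly_Mapping.keys p. \<Sum>b\<in>Poly_Mapping.keys q.
      of_int (Poly_Mapping.lookup p a) * meval z a * (of_int (Poly_Mapping.lookup q b) * meval z b))"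
    by (simp add: peval_single meval_add mult_ac)
  also have "\<dots> = peval z p * peval z q"
    by (simp add: peval_def sum_distrib_left sum_distrib_right) (rule sum.swap)
  finally show ?thesis .
qed

lemma peval_prod [simp]: "peval z (prod f A) = (\<Prod>a\<in>A. peval z (f a))"
  by (induction A rule: infinite_finite_induct) auto

lemma peval_power [simp]: "peval z (p ^ k) = peval z p ^ k"
  by (induction k) auto

lemma peval_psubst: "peval z (psubst L p) = peval (\<lambda>i. peval z (L i)) p"
  unfolding psubst_def peval_sum peval_mult peval_prod peval_power peval_pconst
  by (simp add: peval_def meval_def)

lemma pconst_0 [simp]: "pconst 0 = 0"
  by (simp add: pconst_def)

lemma pconst_add: "pconst (a + b) = pconst a + pconst b"
  by (simp add: pconst_def single_add)

lemma pconst_mult: "pconst (a * b) = pconst a * pconst b"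
  by (simp add: pconst_def mult_single)

lemma pconst_sum: "pconst (sum f A) = (\<Sum>a\<in>A. pconst (f a))"
  by (induction A rule: infinite_finite_induct) (auto simp: pconst_add)

lemma psubst_superset:
  assumes "finite S" "Poly_Mapping.keys p \<subseteq> S"
  shows "psubst L p = (\<Sum>m\<in>S. pconst (Poly_Mapping.lookup p m)
    * (\<Prod>i\<in>Poly_Mapping.keys m. L i ^ Poly_Mapping.lookup m i))"
  unfolding psubst_def
  by (rule sum.mono_neutral_left) (use assms in \<open>auto simp: in_keys_iff pconst_def\<close>)

lemma psubst_0 [simp]: "psubst L 0 = 0"
  by (simp add: psubst_def)

lemma psubst_add: "psubst L (p + q) = psubst L p + psubst L q"
proof -
  let ?S = "Poly_Mapping.keys p \<union> Poly_Mapping.keys q"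
  let ?M = "\<lambda>m. \<Prod>i\<in>Poly_Mapping.keys m. L i ^ Poly_Mapping.lookup m i"
  have "psubst L (p + q) = (\<Sum>m\<in>?S. pconst (Poly_Mapping.lookup (p + q) m) * ?M m)"
    by (rule psubst_superset) (auto dest: set_mp[OF keys_add])
  also have "\<dots> = (\<Sum>m\<in>?S. pconst (Poly_Mapping.lookup p m) * ?M m)
                + (\<Sum>m\<in>?S. pconst (Poly_Mapping.lookup q m) * ?M m)"
    by (simp add: lookup_add pconst_add distrib_right sum.distrib)
  also have "\<dots> = psubst L p + psubst L q"
    using psubst_superset[of ?S p L] psubst_superset[of ?S q L] by simp
  finally show ?thesis .
qed

lemma psubst_sum: "psubst L (sum f A) = (\<Sum>a\<in>A. psubst L (f a))"
  by (induction A rule: infinite_finite_induct) (auto simp: psubst_add)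

lemma psubst_pconst_mult_mvar: "psubst L (pconst a * mvar i) = pconst a * L i"
  by (simp add: pconst_def mvar_def mult_single psubst_def)

lemma in_vars_0 [simp]: "in_vars n 0"
  by (simp add: in_vars_def)

lemma in_vars_pconst [simp]: "in_vars n (pconst c)"
  by (simp add: in_vars_def pconst_def)

lemma in_vars_mvar: "i < n \<Longrightarrow> in_vars n (mvar i)"
  by (simp add: in_vars_def mvar_def)

lemma in_vars_add: "in_vars n p \<Longrightarrow> in_vars n q \<Longrightarrow> in_vars n (p + q)"
  unfolding in_vars_def using keys_add[of p q] by blast

lemma in_vars_diff: "in_vars n p \<Longrightarrow> in_vars n q \<Longrightarrow> in_vars n (p - q)"
  unfolding in_vars_def using keys_diff[of p q] by blast

lemma in_vars_mult: "in_vars n p \<Longrightarrow> in_vars n q \<Longrightarrow> in_vars n (p * q)"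
  unfolding in_vars_def by (blast dest: set_mp[OF keys_mult] set_mp[OF keys_add])

lemma in_vars_sum: "(\<And>a. a \<in> A \<Longrightarrow> in_vars n (f a)) \<Longrightarrow> in_vars n (sum f A)"
  by (induction A rule: infinite_finite_induct) (auto intro: in_vars_add)

section \<open>Homogeneous components\<close>

definition mdeg :: "(nat \<Rightarrow>\<^sub>0 nat) \<Rightarrow> nat" where
  "mdeg m = (\<Sum>i\<in>Poly_Mapping.keys m. Poly_Mapping.lookup m i)"

lemma mdeg_eq_1_imp:
  assumes "mdeg m = 1"
  obtains k where "m = Poly_Mapping.single k 1"
proof -
  obtain k where k: "k \<in> Poly_Mapping.keys m"
    using assms by (fastforce simp: mdeg_def)
  have "Poly_Mapping.lookup m k + (\<Sum>i\<in>Poly_Mapping.keys m - {k}. Poly_Mapping.lookup m i) = 1"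
    using assms k by (simp add: mdeg_def sum.remove)
  moreover have "Poly_Mapping.lookup m k \<ge> 1"
    using k by (simp add: in_keys_iff)
  ultimately have "Poly_Mapping.lookup m k = 1"
    and rest: "(\<Sum>i\<in>Poly_Mapping.keys m - {k}. Poly_Mapping.lookup m i) = 0"
    by linarith+
  moreover have "Poly_Mapping.keys m = {k}"
    using rest k by (auto simp: in_keys_iff)
  ultimately have "m = Poly_Mapping.single k 1"
    by (intro poly_mapping_eqI) (metis in_keys_iff lookup_single_eq lookup_single_not_eq singletonI singletonD)
  then show thesis ..
qed

lemma meval_scale: "meval (\<lambda>i. t * z i) m = t ^ mdeg m * meval z m"
  unfolding meval_def mdeg_def power_mult_distrib prod.distrib power_sum ..

text \<open>The polynomial \<open>t \<mapsto> p(t z)\<close>; its coefficients are the homogeneous components of \<open>p\<close> at \<open>z\<close>.\<close>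
definition radial_poly :: "(nat \<Rightarrow> 'a::{idom,ring_char_0}) \<Rightarrow> ipoly \<Rightarrow> 'a poly" where
  "radial_poly z p = (\<Sum>m\<in>Poly_Mapping.keys p.
      monom (of_int (Poly_Mapping.lookup p m) * meval z m) (mdeg m))"

lemma poly_radial_poly: "poly (radial_poly z p) t = peval (\<lambda>i. t * z i) p"
  unfolding radial_poly_def peval_def poly_sum poly_monom meval_scale
  by (simp add: mult_ac)

lemma radial_poly_eqI: "(\<And>t. peval (\<lambda>i. t * z i) p = poly h t) \<Longrightarrow> radial_poly z p = h"
  using poly_eq_poly_eq_iff[of "radial_poly z p" h] by (auto simp: poly_radial_poly)

lemma coeff_radial_poly_homogeneous:
  assumes "\<And>t. peval (\<lambda>i. t * z i) p = t ^ d * peval z p"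
  shows "coeff (radial_poly z p) d = peval z p"
proof -
  have "radial_poly z p = monom (peval z p) d"
    by (rule radial_poly_eqI) (simp add: assms poly_monom mult_ac)
  then show ?thesis by simp
qed

lemma coeff_radial_poly_0: "coeff (radial_poly z p) 0 = peval (\<lambda>_. 0) p"
  using poly_radial_poly[of z p 0] by (simp add: poly_0_coeff_0)

lemma coeff_radial_poly_1:
  assumes "in_vars n p"
  shows "coeff (radial_poly z p) 1 = (\<Sum>k<n. of_int (Poly_Mapping.lookup p (Poly_Mapping.single k 1)) * z k)"
proof -
  let ?a = "\<lambda>m. of_int (Poly_Mapping.lookup p m) * meval z m"
  let ?K = "{k. k < n \<and> Poly_Mapping.single k 1 \<in> Poly_Mapping.keys p}"
  have "coeff (radial_poly z p) 1 = (\<Sum>m\<in>{m\<in>Poly_Mapping.keys p. mdeg m = 1}. ?a m)"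
    by (simp add: radial_poly_def coeff_sum coeff_monom sum.inter_filter)
  also have "{m\<in>Poly_Mapping.keys p. mdeg m = 1} = (\<lambda>k. Poly_Mapping.single k 1) ` ?K"
  proof (intro equalityI subsetI)
    fix m assume m: "m \<in> {m \<in> Poly_Mapping.keys p. mdeg m = 1}"
    then obtain k where k: "m = Poly_Mapping.single k 1" using mdeg_eq_1_imp by blast
    then have "k < n" using assms m unfolding in_vars_def by fastforce
    then show "m \<in> (\<lambda>k. Poly_Mapping.single k 1) ` ?K" using m k by blast
  qed (auto simp: mdeg_def)
  also have "(\<Sum>m\<in>(\<lambda>k. Poly_Mapping.single k 1) ` ?K. ?a m) = (\<Sum>k\<in>?K. ?a (Poly_Mapping.single k 1))"
    by (rule sum.reindex[unfolded comp_def], rule inj_onI)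
       (metis lookup_single_eq lookup_single_not_eq zero_neq_one)
  also have "\<dots> = (\<Sum>k\<in>?K. of_int (Poly_Mapping.lookup p (Poly_Mapping.single k 1)) * z k)"
    by (simp add: meval_def)
  also have "\<dots> = (\<Sum>k<n. of_int (Poly_Mapping.lookup p (Poly_Mapping.single k 1)) * z k)"
    by (rule sum.mono_neutral_left) (auto simp: in_keys_iff)
  finally show ?thesis .
qed

section \<open>The Bott relations\<close>

definition bott_form :: "(nat \<Rightarrow> nat \<Rightarrow> int) \<Rightarrow> nat \<Rightarrow> (nat \<Rightarrow> rat) \<Rightarrow> rat" where
  "bott_form B k z = z k ^ 2 - (\<Sum>i<k. of_int (B i k) * z i) * z k"

lemma peval_alphaP [simp]: "peval z (alphaP B k) = (\<Sum>i<k. of_int (B i k) * z i)"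
  by (simp add: alphaP_def)

lemma peval_bott_rel [simp]: "peval z (bott_rel B k) = bott_form B k z"
  by (simp add: bott_rel_def bott_form_def power2_eq_square)

lemma bott_form_scale: "bott_form B k (\<lambda>i. t * z i) = t\<^sup>2 * bott_form B k z"
  by (simp add: bott_form_def power2_eq_square sum_distrib_left algebra_simps)

lemma in_vars_alphaP: "j \<le> n \<Longrightarrow> in_vars n (alphaP A j)"
  unfolding alphaP_def by (intro in_vars_sum in_vars_mult in_vars_pconst in_vars_mvar) auto

lemma in_vars_bott_rel: "j < n \<Longrightarrow> in_vars n (bott_rel A j)"
  unfolding bott_rel_def by (intro in_vars_diff in_vars_mult in_vars_mvar in_vars_alphaP) auto

lemma zero_in_bott_ideal: "0 \<in> bott_ideal n B"
  unfolding bott_ideal_def by (intro CollectI exI[of _ "\<lambda>_. 0"]) simp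

lemma bott_rel_in_bott_ideal: "j < n \<Longrightarrow> bott_rel A j \<in> bott_ideal n A"
  unfolding bott_ideal_def
  by (intro CollectI exI[of _ "\<lambda>k. if k = j then 1 else 0"] conjI)
     (auto simp: in_vars_def if_distrib[of "\<lambda>x. x * _"] cong: if_cong)

text \<open>The quadratic form \<open>f\<close> is a combination of the relations \<open>x\<^sub>k\<^sup>2 - \<alpha>\<^sub>k x\<^sub>k\<close>, that is, it vanishes
  in \<open>H\<^sup>4(M(B);\<rat>)\<close>.\<close>
definition bott_null :: "nat \<Rightarrow> (nat \<Rightarrow> nat \<Rightarrow> int) \<Rightarrow> ((nat \<Rightarrow> rat) \<Rightarrow> rat) \<Rightarrow> bool" where
  "bott_null n B f \<longleftrightarrow> (\<exists>c. \<forall>z. f z = (\<Sum>k<n. c k * bott_form B k z))"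

lemma bott_null_bott_form: "k < n \<Longrightarrow> bott_null n B (bott_form B k)"
  unfolding bott_null_def
  by (intro exI[of _ "\<lambda>i. if i = k then 1 else 0"]) (simp add: if_distrib[of "\<lambda>x. x * _"] cong: if_cong)

lemma bott_null_add:
  assumes "bott_null n B f" "bott_null n B g"
  shows "bott_null n B (\<lambda>z. f z + g z)"
proof -
  from assms obtain c d where "\<And>z. f z = (\<Sum>k<n. c k * bott_form B k z)"
    "\<And>z. g z = (\<Sum>k<n. d k * bott_form B k z)"
    unfolding bott_null_def by blast
  then show ?thesis
    unfolding bott_null_def by (intro exI[of _ "\<lambda>k. c k + d k"]) (simp add: distrib_right sum.distrib)
qed

lemma bott_null_scale:
  assumes "bott_null n B f"
  shows "bott_null n B (\<lambda>z. a * f z)"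
proof -
  from assms obtain c where "\<And>z. f z = (\<Sum>k<n. c k * bott_form B k z)"
    unfolding bott_null_def by blast
  then show ?thesis
    unfolding bott_null_def by (intro exI[of _ "\<lambda>k. a * c k"]) (simp add: sum_distrib_left mult.assoc)
qed

lemma bott_null_diff: "bott_null n B f \<Longrightarrow> bott_null n B g \<Longrightarrow> bott_null n B (\<lambda>z. f z - g z)"
  using bott_null_add[of n B f "\<lambda>z. - 1 * g z"] bott_null_scale[of n B g "- 1"] by simp

lemma bott_ideal_radial_poly:
  fixes z :: "nat \<Rightarrow> rat"
  assumes "E \<in> bott_ideal n B"
  shows "coeff (radial_poly z E) 1 = 0" and "bott_null n B (\<lambda>z. coeff (radial_poly z E) 2)"
proof -
  from assms obtain f where E: "E = (\<Sum>k<n. f k * bott_rel B k)"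
    unfolding bott_ideal_def by blast
  have radial: "radial_poly z E = (\<Sum>k<n. monom (bott_form B k z) 2 * radial_poly z (f k))" for z
    by (rule radial_poly_eqI)
       (simp add: E bott_form_scale poly_sum poly_monom poly_radial_poly mult_ac)
  show "coeff (radial_poly z E) 1 = 0"
    by (simp add: radial coeff_sum coeff_monom_mult)
  have "coeff (radial_poly z E) 2 = (\<Sum>k<n. bott_form B k z * peval (\<lambda>_. 0) (f k))" for z
    by (simp add: radial coeff_sum coeff_monom_mult coeff_radial_poly_0)
  then show "bott_null n B (\<lambda>z. coeff (radial_poly z E) 2)"
    unfolding bott_null_def by (auto intro!: exI[of _ "\<lambda>k. peval (\<lambda>_. 0) (f k)"] simp: mult.commute)
qed

lemma bott_ideal_linear_eq_0:
  fixes z :: "nat \<Rightarrow> rat"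
  assumes "E \<in> bott_ideal n B" and "\<And>t (z :: nat \<Rightarrow> rat). peval (\<lambda>i. t * z i) E = t * peval z E"
  shows "peval z E = 0"
proof -
  have "coeff (radial_poly z E) 1 = peval z E"
    by (rule coeff_radial_poly_homogeneous) (simp add: assms(2))
  with bott_ideal_radial_poly(1)[OF assms(1)] show ?thesis by simp
qed

lemma bott_ideal_quadratic_null:
  assumes "E \<in> bott_ideal n B" and "\<And>t (z :: nat \<Rightarrow> rat). peval (\<lambda>i. t * z i) E = t\<^sup>2 * peval z E"
  shows "bott_null n B (\<lambda>z. peval z E)"
proof -
  have "coeff (radial_poly z E) 2 = peval z E" for z :: "nat \<Rightarrow> rat"
    by (rule coeff_radial_poly_homogeneous) (rule assms(2))
  then show ?thesis
    using bott_ideal_radial_poly(2)[OF assms(1)] by simp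
qed

section \<open>Degree two and the isomorphism\<close>

definition lform :: "nat \<Rightarrow> (nat \<Rightarrow> rat) \<Rightarrow> (nat \<Rightarrow> rat) \<Rightarrow> rat" where
  "lform n v z = (\<Sum>k<n. v k * z k)"

lemma lform_unit: "k < n \<Longrightarrow> lform n v (\<lambda>i. if i = k then 1 else 0) = v k"
  by (simp add: lform_def if_distrib[of "\<lambda>x. _ * x"] cong: if_cong)

lemma lform_eq_imp_eq: "(\<And>z. lform n v z = lform n w z) \<Longrightarrow> k < n \<Longrightarrow> v k = w k"
  by (metis lform_unit)

lemma lform_cong: "(\<And>k. k < n \<Longrightarrow> v k = w k) \<Longrightarrow> lform n v z = lform n w z"
  unfolding lform_def by (rule sum.cong) auto

lemma lform_scale: "lform n (\<lambda>k. a * v k) z = a * lform n v z"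
  by (simp add: lform_def sum_distrib_left mult_ac)

lemma lform_homogeneous: "lform n v (\<lambda>i. t * z i) = t * lform n v z"
  by (simp add: lform_def sum_distrib_left mult_ac)

definition lin_poly :: "nat \<Rightarrow> (nat \<Rightarrow> int) \<Rightarrow> ipoly" where
  "lin_poly n w = (\<Sum>k<n. pconst (w k) * mvar k)"

lemma lin_img_eq: "lin_img n P i = lin_poly n (P i)"
  by (simp add: lin_img_def lin_poly_def)

lemma peval_lin_poly: "peval z (lin_poly n w) = lform n (\<lambda>k. of_int (w k)) z"
  by (simp add: lin_poly_def lform_def)

lemma in_vars_lin_poly: "in_vars n (lin_poly n w)"
  unfolding lin_poly_def by (intro in_vars_sum in_vars_mult in_vars_pconst in_vars_mvar) auto

lemma lin_poly_cong: "(\<And>k. k < n \<Longrightarrow> v k = w k) \<Longrightarrow> lin_poly n v = lin_poly n w"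
  unfolding lin_poly_def by (rule sum.cong) auto

lemma psubst_lin_poly: "psubst (lin_img n P) (lin_poly n w) = lin_poly n (\<lambda>k. \<Sum>i<n. w i * P i k)"
proof -
  have "psubst (lin_img n P) (lin_poly n w) = (\<Sum>i<n. \<Sum>k<n. pconst (w i * P i k) * mvar k)"
    by (simp add: lin_poly_def psubst_sum psubst_pconst_mult_mvar lin_img_def
        sum_distrib_left pconst_mult mult.assoc)
  also have "\<dots> = lin_poly n (\<lambda>k. \<Sum>i<n. w i * P i k)"
    by (subst sum.swap) (simp add: lin_poly_def pconst_sum sum_distrib_right)
  finally show ?thesis .
qed

text \<open>As \<open>\<psi>\<close> substitutes \<open>\<Sum>\<^sub>k P i k x\<^sub>k\<close> for \<open>x\<^sub>i\<close>, evaluating \<open>\<psi>(p)\<close> at \<open>z\<close> is evaluating \<open>p\<close> at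
  \<open>psi_point n P z\<close>.\<close>
definition psi_point :: "nat \<Rightarrow> (nat \<Rightarrow> nat \<Rightarrow> int) \<Rightarrow> (nat \<Rightarrow> rat) \<Rightarrow> nat \<Rightarrow> rat" where
  "psi_point n P z = (\<lambda>i. lform n (\<lambda>k. of_int (P i k)) z)"

lemma peval_psubst_lin_img: "peval z (psubst (lin_img n P) p) = peval (psi_point n P z) p"
  by (simp add: peval_psubst lin_img_eq peval_lin_poly psi_point_def)

lemma psi_point_homogeneous: "psi_point n P (\<lambda>i. t * z i) = (\<lambda>i. t * psi_point n P z i)"
  by (simp add: psi_point_def lform_homogeneous)

lemma lform_psiV: "lform n (psiV n P v) z = lform n v (psi_point n P z)"
  unfolding lform_def psiV_def psi_point_def
  by (simp add: sum_distrib_left sum_distrib_right mult_ac) (rule sum.swap)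

lemma psiV_cong: "(\<And>i. i < n \<Longrightarrow> v i = w i) \<Longrightarrow> psiV n P v k = psiV n P w k"
  unfolding psiV_def by (rule sum.cong) auto

lemma psiV_lin: "psiV n P (\<lambda>i. a * v i + b * w i) k = a * psiV n P v k + b * psiV n P w k"
  by (simp add: psiV_def sum.distrib sum_distrib_left algebra_simps)

lemma psiV_scale: "psiV n P (\<lambda>i. a * v i) k = a * psiV n P v k"
  using psiV_lin[of n P a v 0 v k] by simp

lemma psiV_unit: "i < n \<Longrightarrow> psiV n P (\<lambda>k. if k = i then 1 else 0) k' = of_int (P i k')"
  by (simp add: psiV_def if_distrib[of "\<lambda>x. x * _"] cong: if_cong)

lemma bott_graded_iso_ideal_iff:
  assumes "bott_graded_iso n A B P" and "in_vars n p"
  shows "psubst (lin_img n P) p \<in> bott_ideal n B \<longleftrightarrow> p \<in> bott_ideal n A"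
  using assms in_vars_0 unfolding bott_graded_iso_def hcong_def by (metis diff_zero psubst_0)

lemma psiV_surjective_integral:
  assumes iso: "bott_graded_iso n A B P"
  obtains u :: "nat \<Rightarrow> int" where "\<And>k. k < n \<Longrightarrow> psiV n P (\<lambda>i. of_int (u i)) k = of_int (w k)"
proof -
  from iso obtain p where p: "in_vars n p" "hcong n B (psubst (lin_img n P) p) (lin_poly n w)"
    using in_vars_lin_poly unfolding bott_graded_iso_def by blast
  define E where "E = psubst (lin_img n P) p - lin_poly n w"
  have E: "E \<in> bott_ideal n B"
    using p(2) by (simp add: hcong_def E_def)
  define u where "u k = Poly_Mapping.lookup p (Poly_Mapping.single k 1)" for k
  have "lform n (psiV n P (\<lambda>i. of_int (u i))) z = lform n (\<lambda>k. of_int (w k)) z" for z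
  proof -
    have "radial_poly z E = radial_poly (psi_point n P z) p - monom (lform n (\<lambda>k. of_int (w k)) z) 1"
      by (rule radial_poly_eqI)
         (simp add: E_def peval_psubst_lin_img psi_point_homogeneous poly_radial_poly
            peval_lin_poly lform_homogeneous poly_monom)
    then have "coeff (radial_poly (psi_point n P z) p) 1 = lform n (\<lambda>k. of_int (w k)) z"
      using bott_ideal_radial_poly(1)[OF E, of z] by simp
    moreover have "lform n (psiV n P (\<lambda>i. of_int (u i))) z = coeff (radial_poly (psi_point n P z) p) 1"
      by (simp only: lform_psiV coeff_radial_poly_1[OF p(1)]) (simp add: u_def lform_def)
    ultimately show ?thesis by simp
  qed
  then show thesis
    by (intro that) (rule lform_eq_imp_eq)
qed

lemma psiV_injective_integral:
  assumes iso: "bott_graded_iso n A B P"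
    and zero: "\<And>k. k < n \<Longrightarrow> psiV n P (\<lambda>i. of_int (w i)) k = 0" and "i < n"
  shows "w i = 0"
proof -
  have "(\<Sum>i<n. w i * P i k) = 0" if "k < n" for k
  proof -
    have "of_int (\<Sum>i<n. w i * P i k) = (0 :: rat)"
      using zero[OF that] by (simp add: psiV_def)
    then show ?thesis by (simp only: of_int_eq_0_iff)
  qed
  then have "lin_poly n (\<lambda>k. \<Sum>i<n. w i * P i k) = lin_poly n (\<lambda>_. 0)"
    by (rule lin_poly_cong)
  then have "psubst (lin_img n P) (lin_poly n w) = 0"
    by (simp only: psubst_lin_poly) (simp add: lin_poly_def)
  then have "lin_poly n w \<in> bott_ideal n A"
    using bott_graded_iso_ideal_iff[OF iso in_vars_lin_poly] zero_in_bott_ideal by metis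
  then have "peval z (lin_poly n w) = 0" for z :: "nat \<Rightarrow> rat"
    by (rule bott_ideal_linear_eq_0) (simp add: peval_lin_poly lform_homogeneous)
  then have "lform n (\<lambda>k. of_int (w k)) z = lform n (\<lambda>_. 0) z" for z
    by (simp add: peval_lin_poly lform_def)
  from lform_eq_imp_eq[OF this assms(3)] show ?thesis by simp
qed

lemma rat_common_denominator:
  fixes v :: "'b \<Rightarrow> rat"
  assumes "finite I"
  obtains N :: int where "N > 0" and "\<And>i. i \<in> I \<Longrightarrow> of_int N * v i \<in> \<int>"
proof
  define d where "d i = snd (quotient_of (v i))" for i
  show "prod d I > 0"
    by (simp add: d_def prod_pos quotient_of_denom_pos')
  fix i assume i: "i \<in> I"
  obtain a b where ab: "quotient_of (v i) = (a, b)"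
    by fastforce
  then have "v i = of_int a / of_int b" "b > 0"
    using quotient_of_div quotient_of_denom_pos by blast+
  then have "of_int (d i) * v i = of_int a"
    using ab by (simp add: d_def)
  then have "of_int (prod d I) * v i = of_int (a * prod d (I - {i}))"
    using prod.remove[OF assms i, of d] by (simp add: algebra_simps)
  then show "of_int (prod d I) * v i \<in> \<int>"
    by (metis Ints_of_int)
qed

lemma psiV_injective:
  assumes iso: "bott_graded_iso n A B P"
    and zero: "\<And>k. k < n \<Longrightarrow> psiV n P v k = 0" and "i < n"
  shows "v i = 0"
proof -
  obtain N :: int where N: "N > 0" "\<And>i. i < n \<Longrightarrow> of_int N * v i \<in> \<int>"
    using rat_common_denominator[of "{..<n}" v] by auto
  define w where "w i = \<lfloor>of_int N * v i\<rfloor>" for i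
  have w: "of_int (w i) = of_int N * v i" if "i < n" for i
    using N(2)[OF that] by (auto simp: w_def elim!: Ints_cases)
  have "psiV n P (\<lambda>i. of_int (w i)) k = 0" if "k < n" for k
    using zero[OF that] by (simp add: psiV_cong[of n "\<lambda>i. of_int (w i)", OF w] psiV_scale)
  then have "w i = 0"
    by (rule psiV_injective_integral[OF iso _ assms(3)])
  then show ?thesis
    using w[OF assms(3)] N(1) by simp
qed

lemma bott_null_bott_form_psi_point:
  assumes iso: "bott_graded_iso n A B P" and "j < n"
  shows "bott_null n B (\<lambda>z. bott_form A j (psi_point n P z))"
proof -
  have "psubst (lin_img n P) (bott_rel A j) \<in> bott_ideal n B"
    using bott_graded_iso_ideal_iff[OF iso in_vars_bott_rel] bott_rel_in_bott_ideal assms(2) by blast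
  from bott_ideal_quadratic_null[OF this] show ?thesis
    by (simp add: peval_psubst_lin_img psi_point_homogeneous bott_form_scale)
qed

section \<open>Squares in degree four\<close>

lemma lform_divide: "lform n (\<lambda>k. v k / a) z = lform n v z / a"
  by (simp add: lform_def sum_divide_distrib)

lemma lform_alphaV:
  assumes "k \<le> n"
  shows "lform n (alphaV B k) z = (\<Sum>i<k. of_int (B i k) * z i)"
proof -
  have "lform n (alphaV B k) z = (\<Sum>i\<in>{i\<in>{..<n}. i < k}. of_int (B i k) * z i)"
    unfolding sum.inter_filter[OF finite_lessThan] lform_def alphaV_def
    by (rule sum.cong) auto
  also have "{i\<in>{..<n}. i < k} = {..<k}"
    using assms by auto
  finally show ?thesis .
qed

lemma lform_yV: "k < n \<Longrightarrow> lform n (yV B k) z = z k - lform n (alphaV B k) z / 2"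
  by (simp add: lform_def yV_def left_diff_distrib sum_subtractf sum_divide_distrib
      if_distrib[of "\<lambda>x. x * _"] cong: if_cong)

lemma lform_yV_square:
  "k < n \<Longrightarrow> (lform n (yV B k) z)\<^sup>2 = bott_form B k z + (lform n (alphaV B k) z / 2)\<^sup>2"
  by (simp add: lform_yV lform_alphaV[of k n] bott_form_def power2_eq_square algebra_simps)

lemma lform_indicator: "S \<subseteq> {..<n} \<Longrightarrow> lform n u (indicator S) = (\<Sum>i\<in>S. u i)"
  by (simp add: lform_def indicator_def if_distrib[of "\<lambda>x. _ * x"] sum.If_cases Int_absorb1 cong: if_cong)

lemma last_nonzero_index:
  fixes u :: "nat \<Rightarrow> 'a::zero"
  assumes "m < n" and "u m \<noteq> 0"
  obtains L where "m \<le> L" "L < n" "u L \<noteq> 0" "\<And>k. L < k \<Longrightarrow> k < n \<Longrightarrow> u k = 0"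
proof
  let ?S = "{k. k < n \<and> u k \<noteq> 0}"
  have "finite ?S" "m \<in> ?S"
    using assms by auto
  then have "Max ?S \<in> ?S"
    using Max_in[of ?S] by blast
  then show "Max ?S < n" "u (Max ?S) \<noteq> 0"
    by auto
  show "m \<le> Max ?S"
    using \<open>finite ?S\<close> \<open>m \<in> ?S\<close> by simp
  show "u k = 0" if "Max ?S < k" "k < n" for k
    using that Max_ge[OF \<open>finite ?S\<close>, of k] by (auto simp: not_le[symmetric])
qed

lemma bott_form_eq_0: "z k = 0 \<Longrightarrow> bott_form B k z = 0"
  by (simp add: bott_form_def)

lemma sum_bott_form_indicator:
  assumes "S \<subseteq> {..<n}"
  shows "(\<Sum>k<n. c k * bott_form B k (indicator S)) = (\<Sum>k\<in>S. c k * bott_form B k (indicator S))"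
  by (rule sum.mono_neutral_right) (use assms in \<open>auto simp: bott_form_eq_0\<close>)

lemma bott_form_indicator_single: "bott_form B p (indicator {p}) = 1"
  by (simp add: bott_form_def)

lemma bott_form_indicator_pair:
  assumes "k < L"
  shows "bott_form B L (indicator {L, k}) = 1 - of_int (B k L)" and "bott_form B k (indicator {L, k}) = 1"
proof -
  have "(\<Sum>i<L. of_int (B i L) * indicator {L, k} i) = (\<Sum>i\<in>{k}. of_int (B i L) * (indicator {L, k} i :: rat))"
    by (rule sum.mono_neutral_right) (use assms in auto)
  then show "bott_form B L (indicator {L, k}) = 1 - of_int (B k L)"
    using assms by (simp add: bott_form_def)
  have "(\<Sum>i<k. of_int (B i k) * indicator {L, k} i) = (0 :: rat)"
    by (rule sum.neutral) (use assms in auto)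
  then show "bott_form B k (indicator {L, k}) = 1"
    using assms by (simp add: bott_form_def)
qed

text \<open>If \<open>u\<^sup>2 = v\<^sup>2\<close> in \<open>H\<^sup>4(M(B);\<rat>)\<close> and \<open>v\<close> lives below the top nonzero index \<open>L\<close> of \<open>u\<close>, then \<open>u\<close>
  is a multiple of \<open>y\<^sub>L\<close>: testing the relation on \<open>x\<^sub>L\<close> and \<open>x\<^sub>L + x\<^sub>k\<close> fixes every coefficient \<open>u\<^sub>k\<close>.\<close>
lemma bott_null_square_diff_imp_yV:
  assumes m: "m < n" and um: "u m \<noteq> 0" and v0: "\<And>k. m \<le> k \<Longrightarrow> k < n \<Longrightarrow> v k = 0"
    and null: "bott_null n B (\<lambda>z. (lform n u z)\<^sup>2 - (lform n v z)\<^sup>2)"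
  obtains L where "m \<le> L" "L < n" "\<And>k. k < n \<Longrightarrow> u k = u L * yV B L k"
proof -
  obtain c where rel: "\<And>z. (lform n u z)\<^sup>2 - (lform n v z)\<^sup>2 = (\<Sum>k<n. c k * bott_form B k z)"
    using null unfolding bott_null_def by blast
  obtain L where L: "m \<le> L" "L < n" "u L \<noteq> 0" and u0: "\<And>k. L < k \<Longrightarrow> k < n \<Longrightarrow> u k = 0"
    using last_nonzero_index[of m n u] m um by blast
  have single: "(u p)\<^sup>2 - (v p)\<^sup>2 = c p" if "p < n" for p
  proof -
    have S: "{p} \<subseteq> {..<n}" using that by simp
    from rel[of "indicator {p}"] show ?thesis
      by (simp add: lform_indicator[OF S] sum_bott_form_indicator[OF S] bott_form_indicator_single)
  qed
  have cL: "c L = (u L)\<^sup>2"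
    using single[OF \<open>L < n\<close>] v0[OF L(1,2)] by simp
  have "u k = u L * yV B L k" if k: "k < n" for k
  proof (cases k L rule: linorder_cases)
    case less
    have S: "{L, k} \<subseteq> {..<n}" using k L by simp
    have "(u L + u k)\<^sup>2 - (v L + v k)\<^sup>2 = c L * (1 - of_int (B k L)) + c k"
      using rel[of "indicator {L, k}"] less
      by (simp add: lform_indicator[OF S] sum_bott_form_indicator[OF S] bott_form_indicator_pair[OF less])
    then have "u L * (2 * u k + u L * of_int (B k L)) = 0"
      using single[OF k] v0[OF L(1,2)] by (simp add: cL power2_eq_square algebra_simps)
    then have "2 * u k + u L * of_int (B k L) = 0"
      using L(3) mult_eq_0_iff by blast
    then have "u k = - (u L * of_int (B k L)) / 2"
      by linarith
    then show ?thesis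
      using less by (simp add: yV_def alphaV_def)
  qed (use u0 k in \<open>simp_all add: yV_def alphaV_def\<close>)
  with L show thesis
    using that by blast
qed

section \<open>The exceptional classes\<close>

lemma yV_self [simp]: "yV A i i = 1"
  by (simp add: yV_def alphaV_def)

lemma of_int_two_yV:
  "of_int ((if k = l then 2 else 0) - (if k < l then A k l else 0)) = 2 * yV A l k"
  by (simp add: yV_def alphaV_def)

lemma odd_dvd_4_imp:
  fixes u :: int
  assumes "odd u" and "u dvd 4"
  shows "u = 1 \<or> u = -1"
proof -
  have "coprime u (2 * 2)"
    using assms(1) by (simp only: coprime_mult_right_iff coprime_right_2_iff_odd) simp
  then have "is_unit u"
    using coprime_absorb_left[of u "2 * 2"] assms(2) by simp
  then show ?thesis
    by auto
qed

locale bott_scaled_y_iso =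
  fixes n :: nat and A B P :: "nat \<Rightarrow> nat \<Rightarrow> int" and \<sigma> :: "nat \<Rightarrow> nat" and q :: "nat \<Rightarrow> rat"
  assumes iso: "bott_graded_iso n A B P"
    and perm: "\<sigma> permutes {..<n}"
    and q_nonzero: "\<forall>l<n. q l \<noteq> 0"
    and psi_yV: "\<forall>l<n. eqV n (psiV n P (yV A l)) (scaleV (q l) (yV B (\<sigma> l)))"
begin

lemma psiV_yV: "l < n \<Longrightarrow> k < n \<Longrightarrow> psiV n P (yV A l) k = q l * yV B (\<sigma> l) k"
  using psi_yV by (simp add: eqV_def scaleV_def)

lemma sigma_less: "l < n \<Longrightarrow> \<sigma> l < n"
  using permutes_in_image[OF perm] by simp

lemma psiV_eq_scale_yV_imp:
  assumes "i < n" and psi_v: "\<And>k. k < n \<Longrightarrow> psiV n P v k = t * yV B (\<sigma> i) k" and "k < n"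
  shows "v k = t / q i * yV A i k"
proof -
  have "psiV n P (\<lambda>k. 1 * v k + (- (t / q i)) * yV A i k) k' = 0" if "k' < n" for k'
    using q_nonzero assms(1) by (simp only: psiV_lin psi_v[OF that] psiV_yV[OF assms(1) that]) simp
  from psiV_injective[OF iso this assms(3)] show ?thesis
    by simp
qed

text \<open>Both \<open>2 y\<^sup>A\<^sub>l\<close> and \<open>2 y\<^sup>B\<^sub>\<sigma>\<^sub>l\<close> are integral classes: the image of the first makes \<open>2 q\<^sub>l\<close> an integer,
  and the preimage \<open>(2/q\<^sub>l) y\<^sup>A\<^sub>l\<close> of the second makes \<open>2/q\<^sub>l\<close> one.\<close>
lemma two_div_q_dvd_4:
  assumes l: "l < n"
  obtains u :: int where "u dvd 4" and "2 / q l = of_int u"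
proof -
  define a where "a = (\<Sum>i<n. ((if i = l then 2 else 0) - (if i < l then A i l else 0)) * P i (\<sigma> l))"
  have "of_int a = psiV n P (\<lambda>k. 2 * yV A l k) (\<sigma> l)"
    unfolding a_def psiV_def of_int_sum of_int_mult of_int_two_yV ..
  also have "\<dots> = 2 * q l"
    using l by (simp add: psiV_scale psiV_yV sigma_less)
  finally have a: "of_int a = 2 * q l" .
  obtain u where u: "\<And>k. k < n \<Longrightarrow> psiV n P (\<lambda>i. of_int (u i)) k
      = of_int ((if k = \<sigma> l then 2 else 0) - (if k < \<sigma> l then B k (\<sigma> l) else 0))"
    using psiV_surjective_integral[OF iso,
        where w = "\<lambda>k. (if k = \<sigma> l then 2 else 0) - (if k < \<sigma> l then B k (\<sigma> l) else 0)"]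
    by blast
  have "of_int (u l) = 2 / q l * yV A l l"
    using l by (intro psiV_eq_scale_yV_imp) (auto simp only: u of_int_two_yV)
  then have u_l: "of_int (u l) = 2 / q l"
    by simp
  have "of_int (a * u l) = (4 :: rat)"
    using a u_l q_nonzero l by simp
  then have "a * u l = 4"
    by (simp only: of_int_eq_numeral_iff)
  then show thesis
    using that u_l by (metis dvd_triv_right)
qed

end

locale bott_scaled_y_iso_half = bott_scaled_y_iso +
  fixes j :: nat
  assumes j_less: "j < n" and q_j: "q j = 1/2 \<or> q j = -1/2"
begin

definition psi_alpha :: "nat \<Rightarrow> rat" where
  "psi_alpha = psiV n P (alphaV A j)"

lemma q_j_square: "(q j)\<^sup>2 = 1 / 4"
  using q_j
proof
  assume q: "q j = 1/2"
  show ?thesis unfolding q by (simp add: power2_eq_square)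
next
  assume q: "q j = -1/2"
  show ?thesis unfolding q by (simp add: power2_eq_square)
qed

lemma of_int_P_j: "k < n \<Longrightarrow> of_int (P j k) = q j * yV B (\<sigma> j) k + psi_alpha k / 2"
proof -
  assume k: "k < n"
  have "(\<lambda>i. if i = j then 1 else 0) = (\<lambda>i. 1 * yV A j i + (1/2) * alphaV A j i)"
    by (auto simp: yV_def)
  then have "of_int (P j k) = psiV n P (\<lambda>i. 1 * yV A j i + (1/2) * alphaV A j i) k"
    using psiV_unit[OF j_less] by metis
  then show ?thesis
    using k j_less by (simp only: psiV_lin psiV_yV psi_alpha_def)
qed

lemma bott_null_psi_alpha:
  "bott_null n B (\<lambda>z. (lform n psi_alpha z)\<^sup>2 - (lform n (\<lambda>k. alphaV B (\<sigma> j) k / 2) z)\<^sup>2)"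
proof -
  have eq: "(lform n psi_alpha z)\<^sup>2 - (lform n (\<lambda>k. alphaV B (\<sigma> j) k / 2) z)\<^sup>2
      = bott_form B (\<sigma> j) z - 4 * bott_form A j (psi_point n P z)" for z
  proof -
    let ?T = "lform n psi_alpha z" and ?Y = "lform n (yV B (\<sigma> j)) z"
    have "psi_point n P z j = q j * ?Y + ?T / 2"
      unfolding psi_point_def using of_int_P_j
      by (simp add: lform_def sum.distrib sum_distrib_left sum_divide_distrib algebra_simps)
    moreover have "(\<Sum>i<j. of_int (A i j) * psi_point n P z i) = ?T"
      using j_less by (simp add: psi_alpha_def lform_psiV lform_alphaV)
    ultimately have "bott_form A j (psi_point n P z) = (q j)\<^sup>2 * ?Y\<^sup>2 - ?T\<^sup>2 / 4"
      by (simp add: bott_form_def power2_eq_square algebra_simps)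
    then show ?thesis
      using lform_yV_square[OF sigma_less[OF j_less], of B z] q_j_square by (simp add: lform_divide field_simps)
  qed
  show ?thesis
    unfolding eq
    by (intro bott_null_diff bott_null_scale bott_null_bott_form bott_null_bott_form_psi_point
        iso j_less sigma_less)
qed

lemma odd_of_int_eq_2_q_j: "of_int N = 2 * q j \<Longrightarrow> odd N"
  using q_j
proof
  assume "of_int N = 2 * q j" "q j = 1/2"
  then have "of_int N = (of_int 1 :: rat)" by simp
  then show "odd N" by (simp only: of_int_eq_iff) simp
next
  assume "of_int N = 2 * q j" "q j = -1/2"
  then have "of_int N = (of_int (-1) :: rat)" by simp
  then show "odd N" by (simp only: of_int_eq_iff) simp
qed

lemma psi_alpha_sigma_j_nonzero: "psi_alpha (\<sigma> j) \<noteq> 0"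
proof
  assume "psi_alpha (\<sigma> j) = 0"
  then have "of_int (2 * P j (\<sigma> j)) = 2 * q j"
    using of_int_P_j[OF sigma_less[OF j_less]] by simp
  then show False
    using odd_of_int_eq_2_q_j by fastforce
qed

lemma psi_alpha_multiple_yV:
  obtains i where "i < n" and "\<And>k. k < n \<Longrightarrow> psi_alpha k = psi_alpha (\<sigma> i) * yV B (\<sigma> i) k"
proof -
  obtain L where "L < n" and L: "\<And>k. k < n \<Longrightarrow> psi_alpha k = psi_alpha L * yV B L k"
    using bott_null_square_diff_imp_yV[OF sigma_less[OF j_less] psi_alpha_sigma_j_nonzero _ bott_null_psi_alpha]
    by (auto simp: alphaV_def)
  show thesis
  proof
    show "inv \<sigma> L < n"
      using permutes_in_image[OF permutes_inv[OF perm]] \<open>L < n\<close> by simp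
    show "psi_alpha k = psi_alpha (\<sigma> (inv \<sigma> L)) * yV B (\<sigma> (inv \<sigma> L)) k" if "k < n" for k
      using L[OF that] permutes_inverses(1)[OF perm] by simp
  qed
qed

context
  fixes i :: nat and t :: rat
  assumes i_less: "i < n"
    and psi_alpha_eq: "\<And>k. k < n \<Longrightarrow> psi_alpha k = t * yV B (\<sigma> i) k"
begin

lemma alphaV_A_j_eq: "k < n \<Longrightarrow> alphaV A j k = t / q i * yV A i k"
  by (rule psiV_eq_scale_yV_imp[OF i_less psi_alpha_eq[unfolded psi_alpha_def]])

lemma t_nonzero: "t \<noteq> 0"
  using psi_alpha_sigma_j_nonzero psi_alpha_eq[OF sigma_less[OF j_less]] by auto

lemma i_less_j: "i < j" and of_int_A_i_j: "of_int (A i j) = t / q i"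
proof -
  have "alphaV A j i = t / q i" and "t / q i \<noteq> 0"
    using alphaV_A_j_eq[OF i_less] t_nonzero q_nonzero i_less by simp_all
  then show "i < j" and "of_int (A i j) = t / q i"
    by (auto simp: alphaV_def split: if_splits)
qed

lemma exc_with_A_j: "exc_with n A j (A i j) i"
  using i_less_j of_int_A_i_j alphaV_A_j_eq t_nonzero q_nonzero i_less
  by (auto simp: exc_with_def eqV_def scaleV_def)

lemma sigma_j_less_sigma_i: "\<sigma> j < \<sigma> i"
proof -
  have "yV B (\<sigma> i) (\<sigma> j) \<noteq> 0"
    using psi_alpha_sigma_j_nonzero psi_alpha_eq[OF sigma_less[OF j_less]] by auto
  then have "\<sigma> j \<le> \<sigma> i"
    by (auto simp: yV_def alphaV_def split: if_splits)
  moreover have "\<sigma> j \<noteq> \<sigma> i"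
    using permutes_inj[OF perm] i_less_j by (auto dest: injD)
  ultimately show ?thesis
    by simp
qed

lemma t_eq_2_P_j: "t = 2 * of_int (P j (\<sigma> i))"
  using of_int_P_j[OF sigma_less[OF i_less]] psi_alpha_eq[OF sigma_less[OF i_less]] sigma_j_less_sigma_i
  by (simp add: yV_def alphaV_def)

lemma odd_P_j_B: "odd (P j (\<sigma> i) * B (\<sigma> j) (\<sigma> i))"
proof -
  have "psi_alpha (\<sigma> j) = - of_int (P j (\<sigma> i) * B (\<sigma> j) (\<sigma> i))"
    using psi_alpha_eq[OF sigma_less[OF j_less]] sigma_j_less_sigma_i by (simp add: t_eq_2_P_j yV_def alphaV_def)
  then have "of_int (2 * P j (\<sigma> j) + P j (\<sigma> i) * B (\<sigma> j) (\<sigma> i)) = 2 * q j"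
    using of_int_P_j[OF sigma_less[OF j_less]] by simp
  then have "odd (2 * P j (\<sigma> j) + P j (\<sigma> i) * B (\<sigma> j) (\<sigma> i))"
    by (rule odd_of_int_eq_2_q_j)
  then show ?thesis
    by simp
qed

lemma q_i_eq_pm_2: "odd (A i j) \<Longrightarrow> q i = 2 \<or> q i = -2"
proof -
  assume odd: "odd (A i j)"
  obtain u where "u dvd 4" and u: "2 / q i = of_int u"
    using two_div_q_dvd_4[OF i_less] by blast
  have "of_int (A i j) = of_int (P j (\<sigma> i)) * (2 / q i)"
    using of_int_A_i_j by (simp add: t_eq_2_P_j)
  then have "A i j = P j (\<sigma> i) * u"
    unfolding u by (simp only: of_int_mult[symmetric] of_int_eq_iff)
  then have "odd u"
    using odd by simp
  with \<open>u dvd 4\<close> have "u = 1 \<or> u = -1"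
    by (rule odd_dvd_4_imp[rotated])
  then show ?thesis
    using u q_nonzero i_less by (auto simp: field_simps)
qed

lemma bott_null_scaled_alphaV:
  "bott_null n B (\<lambda>z. (lform n (\<lambda>k. t / 2 * alphaV B (\<sigma> i) k) z)\<^sup>2
                    - (lform n (\<lambda>k. alphaV B (\<sigma> j) k / 2) z)\<^sup>2)"
proof -
  have "(lform n (\<lambda>k. t / 2 * alphaV B (\<sigma> i) k) z)\<^sup>2 - (lform n (\<lambda>k. alphaV B (\<sigma> j) k / 2) z)\<^sup>2
      = ((lform n psi_alpha z)\<^sup>2 - (lform n (\<lambda>k. alphaV B (\<sigma> j) k / 2) z)\<^sup>2)
        - t\<^sup>2 * bott_form B (\<sigma> i) z" for z
  proof -
    have psi: "lform n psi_alpha z = t * lform n (yV B (\<sigma> i)) z"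
      using lform_cong[of n psi_alpha "\<lambda>k. t * yV B (\<sigma> i) k" z] psi_alpha_eq by (simp add: lform_scale)
    show ?thesis
      unfolding lform_scale psi power_mult_distrib lform_yV_square[OF sigma_less[OF i_less]]
      by (simp add: field_simps power2_eq_square)
  qed
  then show ?thesis
    by (simp only:) (intro bott_null_diff bott_null_psi_alpha bott_null_scale bott_null_bott_form
        sigma_less i_less)
qed

lemma alphaV_sigma_i_eq_yV:
  obtains M where "\<sigma> j \<le> M" "M < \<sigma> i" "B M (\<sigma> i) \<noteq> 0"
    "\<And>k. k < n \<Longrightarrow> alphaV B (\<sigma> i) k = of_int (B M (\<sigma> i)) * yV B M k"
proof -
  define u where "u k = t / 2 * alphaV B (\<sigma> i) k" for k
  have "u (\<sigma> j) \<noteq> 0"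
    using t_nonzero odd_P_j_B sigma_j_less_sigma_i by (auto simp: u_def alphaV_def)
  moreover have "\<And>k. \<sigma> j \<le> k \<Longrightarrow> k < n \<Longrightarrow> alphaV B (\<sigma> j) k / 2 = 0"
    by (simp add: alphaV_def)
  ultimately obtain M where M: "\<sigma> j \<le> M" "M < n" and u_eq: "\<And>k. k < n \<Longrightarrow> u k = u M * yV B M k"
    using bott_null_square_diff_imp_yV[OF sigma_less[OF j_less] _ _ bott_null_scaled_alphaV[folded u_def]]
    by blast
  have "u M \<noteq> 0"
    using u_eq[OF sigma_less[OF j_less]] \<open>u (\<sigma> j) \<noteq> 0\<close> by auto
  then have "M < \<sigma> i" "B M (\<sigma> i) \<noteq> 0"
    by (auto simp: u_def alphaV_def split: if_splits)
  moreover have "alphaV B (\<sigma> i) k = of_int (B M (\<sigma> i)) * yV B M k" if "k < n" for k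
  proof -
    have "alphaV B (\<sigma> i) M = of_int (B M (\<sigma> i))"
      using \<open>M < \<sigma> i\<close> by (simp add: alphaV_def)
    then show ?thesis
      using u_eq[OF that] t_nonzero by (simp add: u_def)
  qed
  ultimately show thesis
    using that M(1) by blast
qed

lemma alphaV_sigma_i_odd_multiple:
  assumes "\<not> even_exceptional n B (\<sigma> i)"
  shows "\<exists>d. odd d \<and> eqV n (alphaV B (\<sigma> i)) (scaleV (of_int d) (yV B (\<sigma> j)))"
proof -
  obtain M where M: "\<sigma> j \<le> M" "M < \<sigma> i" "B M (\<sigma> i) \<noteq> 0"
    and alpha: "\<And>k. k < n \<Longrightarrow> alphaV B (\<sigma> i) k = of_int (B M (\<sigma> i)) * yV B M k"
    using alphaV_sigma_i_eq_yV by blast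
  have "exc_with n B (\<sigma> i) (B M (\<sigma> i)) M"
    using M alpha by (auto simp: exc_with_def eqV_def scaleV_def)
  then have odd: "odd (B M (\<sigma> i))"
    using assms by (auto simp: even_exceptional_def)
  have "M = \<sigma> j"
  proof (rule ccontr)
    assume "M \<noteq> \<sigma> j"
    then have "\<sigma> j < M" "M < n"
      using M sigma_less[OF i_less] by simp_all
    then have "of_int (P j M) = psi_alpha M / 2"
      using of_int_P_j by (simp add: yV_def alphaV_def)
    also have "\<dots> = - of_int (P j (\<sigma> i) * B M (\<sigma> i)) / 2"
      using psi_alpha_eq[OF \<open>M < n\<close>] M by (simp add: t_eq_2_P_j yV_def alphaV_def)
    finally have "of_int (2 * P j M) = (of_int (- (P j (\<sigma> i) * B M (\<sigma> i))) :: rat)"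
      by simp
    then have "2 * P j M = - (P j (\<sigma> i) * B M (\<sigma> i))"
      by (simp only: of_int_eq_iff)
    then have "even (P j (\<sigma> i) * B M (\<sigma> i))"
      by (metis dvd_triv_left even_minus)
    then show False
      using odd odd_P_j_B by simp
  qed
  then show ?thesis
    using odd alpha by (auto simp: eqV_def scaleV_def)
qed

end

lemma exceptional_alpha_j:
  "\<exists>i c. exc_with n A j c i \<and>
     (\<not> even_exceptional n A j \<longrightarrow> odd c \<and> (q i = 2 \<or> q i = -2)) \<and>
     (\<not> even_exceptional n A j \<and> \<not> even_exceptional n B (\<sigma> i) \<longrightarrow>
        (\<exists>d::int. odd d \<and> eqV n (alphaV B (\<sigma> i)) (scaleV (of_int d) (yV B (\<sigma> j)))))"
proof -
  obtain i where i: "i < n" and eq: "\<And>k. k < n \<Longrightarrow> psi_alpha k = psi_alpha (\<sigma> i) * yV B (\<sigma> i) k"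
    using psi_alpha_multiple_yV by blast
  have exc: "exc_with n A j (A i j) i"
    by (rule exc_with_A_j[OF i eq])
  moreover have "odd (A i j)" if "\<not> even_exceptional n A j"
    using exc that by (auto simp: even_exceptional_def)
  ultimately show ?thesis
    using q_i_eq_pm_2[OF i eq] alphaV_sigma_i_odd_multiple[OF i eq] by blast
qed

end

theorem lemma4p4:
  fixes n :: nat and A B P :: "nat \<Rightarrow> nat \<Rightarrow> int" and \<sigma> :: "nat \<Rightarrow> nat"
    and q :: "nat \<Rightarrow> rat" and j :: nat
  assumes "su_matrix n A" and "su_matrix n B"
    and "bott_graded_iso n A B P"
    and "\<sigma> permutes {..<n}"
    and "\<forall>l<n. q l \<noteq> 0"
    and "\<forall>l<n. eqV n (psiV n P (yV A l)) (scaleV (q l) (yV B (\<sigma> l)))"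
    and "j < n" and "q j = 1/2 \<or> q j = -1/2"
  shows "\<exists>i c. exc_with n A j c i \<and>
           (\<not> even_exceptional n A j \<longrightarrow> odd c \<and> (q i = 2 \<or> q i = -2)) \<and>
           (\<not> even_exceptional n A j \<and> \<not> even_exceptional n B (\<sigma> i) \<longrightarrow>
              (\<exists>d::int. odd d \<and> eqV n (alphaV B (\<sigma> i)) (scaleV (of_int d) (yV B (\<sigma> j)))))"
proof -
  interpret bott_scaled_y_iso_half n A B P \<sigma> q j
    by unfold_locales (rule assms)+
  show ?thesis
    by (rule exceptional_alpha_j)
qed

end
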